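(* Let $q$ be a power of an odd prime with $q\equiv1\pmod4$, let $k\ge3$ be a divisor of $q-1$ with $(q-1)/k$ even, and let $B$ be the subgroup of order $k$ of $\mathbb{F}_q^\times$. Then $(q,k)$ gives a $3$-design if and only if $$\sum_{\{x,y,z\}\in\binom{B}{3}}\chi\big((x-y)(y-z)(z-x)\big)=0,$$ where $\binom{B}{3}$ denotes the set of $3$-element subsets of $B$.
   Context: The group $\mathrm{PSL}(2,q)$ acts on $\mathrm{PG}(1,q)=\mathbb{F}_q\cup\{\infty\}$ by linear fractional transformations $z\mapsto (az+b)/(cz+d)$ with $ad-bc$ a nonzero square in $\mathbb{F}_q$. "$(q,k)$ gives a $3$-design" means that the $\mathrm{PSL}(2,q)$-orbit of $B$ is the block set of a $3$-$(q+1,k,\lambda)$ design for some positive integer $\lambda$. $\chi$ is the quadratic residue character: $\chi(a)=1$ if $a$ is a nonzero square in $\mathbb{F}_q$, $\chi(a)=-1$ otherwise (the summand is well defined since $\chi(-1)=1$). *)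

theory Defs
  imports Main
begin

definition qchi :: "'a::field \<Rightarrow> int" where
  "qchi x = (if x = 0 then 0 else if (\<exists>y. y ^ 2 = x) then 1 else -1)"

text \<open>The projective line PG(1,q): None is the point at infinity.\<close>
type_synonym 'a pg1 = "'a option"

definition lft :: "'a::field \<Rightarrow> 'a \<Rightarrow> 'a \<Rightarrow> 'a \<Rightarrow> 'a option \<Rightarrow> 'a option" where
  "lft a b c d p = (case p of
      None \<Rightarrow> (if c = 0 then None else Some (a / c))
    | Some z \<Rightarrow> (if c * z + d = 0 then None else Some ((a * z + b) / (c * z + d))))"

definition psl_maps :: "('a::field option \<Rightarrow> 'a option) set" where
  "psl_maps = {lft a b c d | a b c d. \<exists>e. e \<noteq> 0 \<and> a * d - b * c = e ^ 2}"

definition psl_orbit :: "'a::field option set \<Rightarrow> 'a option set set" where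
  "psl_orbit S = {g ` S | g. g \<in> psl_maps}"

definition is_3design :: "'p set \<Rightarrow> nat \<Rightarrow> 'p set set \<Rightarrow> bool" where
  "is_3design X k blocks \<longleftrightarrow> finite X \<and> (\<forall>Bl\<in>blocks. Bl \<subseteq> X \<and> card Bl = k) \<and>
     (\<exists>lam::nat. lam > 0 \<and>
        (\<forall>T. T \<subseteq> X \<and> card T = 3 \<longrightarrow> card {Bl \<in> blocks. T \<subseteq> Bl} = lam))"

definition gives_3design :: "'a::{finite,field} set \<Rightarrow> nat \<Rightarrow> bool" where
  "gives_3design B k \<longleftrightarrow> is_3design (UNIV :: 'a option set) k (psl_orbit (Some ` B))"

definition tri_chi :: "'a::field set \<Rightarrow> int" where
  "tri_chi S = (case (SOME t. case t of (x, y, z) \<Rightarrow> S = {x, y, z}) of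
       (x, y, z) \<Rightarrow> qchi ((x - y) * (y - z) * (z - x)))"

end

theory Submission
  imports Defs
begin

text \<open>
  For q = 1 (mod 4) the quadratic character of (x - y)(y - z)(z - x), computed in homogeneous
  coordinates, is an invariant of 3-subsets of PG(1,q): it does not depend on the order of the points
  because -1 is a square, and a linear fractional map of determinant D multiplies it by chi(D).
  So PSL(2,q) preserves the two sign classes of 3-subsets; it is transitive on each class, since every
  3-subset is the image of {infinity, 0, t} for any t of the same sign; and multiplication by a
  non-square exchanges the classes, which therefore have equal size. Counting incidences between a class
  and the orbit of the base block shows that the number of blocks through a 3-subset of sign e is
  |orbit| * A(e) / |class|, where A(e) counts the 3-subsets of the base block of sign e. Hence the orbit
  is a 3-design iff A(1) = A(-1), i.e. iff the character sum vanishes.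
  Only q = 1 (mod 4) and k >= 3 are used.
\<close>

lemma card_eq_twice_card_image:
  assumes "finite A" "\<And>x. x \<in> A \<Longrightarrow> card {y\<in>A. f y = f x} = 2"
  shows "card A = 2 * card (f ` A)"
proof -
  have partition: "A = (\<Union>b\<in>f ` A. {y\<in>A. f y = b})" by auto
  have "card A = (\<Sum>b\<in>f ` A. card {y\<in>A. f y = b})"
    by (subst partition, rule card_UN_disjoint) (use assms(1) in auto)
  also have "\<dots> = (\<Sum>b\<in>f ` A. 2)"
    using assms(2) by (intro sum.cong) auto
  finally show ?thesis by simp
qed

lemma even_card_involution:
  assumes "finite A" "\<And>x. x \<in> A \<Longrightarrow> f x \<in> A \<and> f x \<noteq> x \<and> f (f x) = x"
  shows "even (card A)"
proof -
  have "card {y\<in>A. {y, f y} = {x, f x}} = 2" if "x \<in> A" for x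
  proof -
    have "{y\<in>A. {y, f y} = {x, f x}} = {x, f x}"
      using assms(2) that by (auto simp: doubleton_eq_iff)
    then show ?thesis using assms(2)[OF that] by (auto simp: card_insert_if)
  qed
  then have "card A = 2 * card ((\<lambda>x. {x, f x}) ` A)"
    by (rule card_eq_twice_card_image[OF assms(1)])
  then show ?thesis by simp
qed

lemma card_filter_image_eq:
  assumes "inj_on h C" "h ` C = C"
  shows "card {x\<in>C. P (h x)} = card {x\<in>C. P x}"
proof -
  have "inj_on h {x\<in>C. P (h x)}"
    using assms(1) by (rule inj_on_subset) auto
  then have "card {x\<in>C. P (h x)} = card (h ` {x\<in>C. P (h x)})"
    by (rule card_image[symmetric])
  also have "h ` {x\<in>C. P (h x)} = {y\<in>h ` C. P y}" by auto
  finally show ?thesis using assms(2) by simp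
qed

lemma sum_plus_minus_one:
  fixes f :: "'b \<Rightarrow> int"
  assumes "finite X" "\<And>x. x \<in> X \<Longrightarrow> f x = 1 \<or> f x = -1"
  shows "(\<Sum>x\<in>X. f x) = int (card {x\<in>X. f x = 1}) - int (card {x\<in>X. f x = -1})"
proof -
  have X: "X = {x\<in>X. f x = 1} \<union> {x\<in>X. f x = -1}" using assms(2) by blast
  have "(\<Sum>x\<in>X. f x) = (\<Sum>x\<in>{x\<in>X. f x = 1}. f x) + (\<Sum>x\<in>{x\<in>X. f x = -1}. f x)"
    by (subst X, rule sum.union_disjoint) (use assms(1) in auto)
  also have "(\<Sum>x\<in>{x\<in>X. f x = 1}. f x) = int (card {x\<in>X. f x = 1})"
    by simp
  also have "(\<Sum>x\<in>{x\<in>X. f x = -1}. f x) = - int (card {x\<in>X. f x = -1})"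
    by simp
  finally show ?thesis by simp
qed

lemma sum_card_filter_swap:
  assumes "finite A" "finite C"
  shows "(\<Sum>a\<in>A. card {c\<in>C. R a c}) = (\<Sum>c\<in>C. card {a\<in>A. R a c})"
  unfolding card_eq_sum by (rule sum.swap_restrict[OF assms])

definition nonzero_squares :: "'a::field set" where
  "nonzero_squares = {x. x \<noteq> 0 \<and> (\<exists>y. y ^ 2 = x)}"

lemma qchi_eq_if: "qchi x = (if x = 0 then 0 else if x \<in> nonzero_squares then 1 else -1)"
  by (simp add: qchi_def nonzero_squares_def)

lemma qchi_eq_1_iff: "qchi x = 1 \<longleftrightarrow> (\<exists>e. e \<noteq> 0 \<and> x = e ^ 2)"
  by (auto simp: qchi_def)

lemma qchi_neq_0: "x \<noteq> 0 \<Longrightarrow> qchi x = 1 \<or> qchi x = -1"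
  by (simp add: qchi_def)

lemma qchi_square_mult:
  assumes "s \<noteq> 0"
  shows "qchi (s ^ 2 * x) = qchi x"
proof -
  have "(\<exists>y. y ^ 2 = s ^ 2 * x) \<longleftrightarrow> (\<exists>y. y ^ 2 = x)"
  proof
    assume "\<exists>y. y ^ 2 = s ^ 2 * x"
    then obtain y where "y ^ 2 = s ^ 2 * x" by blast
    then have "(y / s) ^ 2 = x" using assms by (simp add: power_divide)
    then show "\<exists>y. y ^ 2 = x" by blast
  next
    assume "\<exists>y. y ^ 2 = x"
    then obtain y where "y ^ 2 = x" by blast
    then have "(s * y) ^ 2 = s ^ 2 * x" by (simp add: power_mult_distrib)
    then show "\<exists>y. y ^ 2 = s ^ 2 * x" by blast
  qed
  then show ?thesis using assms by (simp add: qchi_def)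
qed

lemma one_in_nonzero_squares: "1 \<in> nonzero_squares"
  unfolding nonzero_squares_def by (auto intro: exI[of _ 1])

lemma qchi_one: "qchi 1 = 1"
  using one_in_nonzero_squares by (simp add: qchi_eq_if)

lemma nonzero_squares_mult: "x \<in> nonzero_squares \<Longrightarrow> y \<in> nonzero_squares \<Longrightarrow> x * y \<in> nonzero_squares"
  unfolding nonzero_squares_def by (auto simp flip: power_mult_distrib)

lemma nonzero_squares_inverse: "x \<in> nonzero_squares \<Longrightarrow> inverse x \<in> nonzero_squares"
  unfolding nonzero_squares_def by (auto simp flip: power_inverse)

lemma nonzero_squares_cancel:
  assumes "x \<in> nonzero_squares" "x * y \<in> nonzero_squares"
  shows "y \<in> nonzero_squares"
proof -
  have "x \<noteq> 0" using assms(1) by (simp add: nonzero_squares_def)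
  then have "y = inverse x * (x * y)" by (simp add: field_simps)
  also have "\<dots> \<in> nonzero_squares"
    by (rule nonzero_squares_mult[OF nonzero_squares_inverse[OF assms(1)] assms(2)])
  finally show ?thesis .
qed

definition hvec :: "'a::field option \<Rightarrow> 'a \<times> 'a" where
  "hvec p = (case p of None \<Rightarrow> (1, 0) | Some x \<Rightarrow> (x, 1))"

definition det2 :: "'a::field \<times> 'a \<Rightarrow> 'a \<times> 'a \<Rightarrow> 'a" where
  "det2 u v = fst u * snd v - snd u * fst v"

definition mat_apply :: "'a::field \<Rightarrow> 'a \<Rightarrow> 'a \<Rightarrow> 'a \<Rightarrow> 'a \<times> 'a \<Rightarrow> 'a \<times> 'a" where
  "mat_apply a b c d u = (a * fst u + b * snd u, c * fst u + d * snd u)"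

definition scale :: "'a::field \<Rightarrow> 'a \<times> 'a \<Rightarrow> 'a \<times> 'a" where
  "scale l u = (l * fst u, l * snd u)"

lemma det2_mat_apply: "det2 (mat_apply a b c d u) (mat_apply a b c d v) = (a * d - b * c) * det2 u v"
  by (simp add: det2_def mat_apply_def algebra_simps)

lemma det2_scale [simp]:
  "det2 (scale l u) v = l * det2 u v"
  "det2 u (scale l v) = l * det2 u v"
  by (simp_all add: det2_def scale_def algebra_simps)

lemma det2_self [simp]: "det2 u u = 0"
  by (simp add: det2_def)

lemma det2_swap: "det2 v u = - det2 u v"
  by (simp add: det2_def algebra_simps)

lemma det2_hvec_eq_0_iff: "det2 (hvec p) (hvec q) = 0 \<longleftrightarrow> p = q"
  by (cases p; cases q) (auto simp: det2_def hvec_def)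

lemma mat_apply_scale: "mat_apply a b c d (scale l u) = scale l (mat_apply a b c d u)"
  by (simp add: mat_apply_def scale_def algebra_simps)

lemma mat_apply_mat_apply:
  "mat_apply a b c d (mat_apply a' b' c' d' u) =
   mat_apply (a * a' + b * c') (a * b' + b * d') (c * a' + d * c') (c * b' + d * d') u"
  by (simp add: mat_apply_def algebra_simps)

lemma scale_hvec_eq_scale_hvec:
  assumes "scale l (hvec p) = scale m (hvec q)" "l \<noteq> 0"
  shows "p = q"
  using assms by (cases p; cases q) (auto simp: scale_def hvec_def)

lemma mat_apply_hvec:
  assumes "a * d - b * c \<noteq> 0"
  shows "\<exists>l. l \<noteq> 0 \<and> mat_apply a b c d (hvec p) = scale l (hvec (lft a b c d p))"
proof (cases p)
  case None
  show ?thesis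
  proof (cases "c = 0")
    case True
    with assms have "a \<noteq> 0" by auto
    with None True show ?thesis
      by (intro exI[of _ a]) (simp add: mat_apply_def scale_def hvec_def lft_def)
  next
    case False
    with None show ?thesis
      by (intro exI[of _ c]) (simp add: mat_apply_def scale_def hvec_def lft_def)
  qed
next
  case (Some z)
  show ?thesis
  proof (cases "c * z + d = 0")
    case True
    have "a * d - b * c = a * (c * z + d) - c * (a * z + b)"
      by (simp add: algebra_simps)
    with assms True have "a * z + b \<noteq> 0" by auto
    with Some True show ?thesis
      by (intro exI[of _ "a * z + b"]) (simp add: mat_apply_def scale_def hvec_def lft_def)
  next
    case False
    with Some show ?thesis
      by (intro exI[of _ "c * z + d"]) (simp add: mat_apply_def scale_def hvec_def lft_def)
  qed
qed

lemma lft_eq_iff: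
  assumes "a * d - b * c \<noteq> 0"
  shows "lft a b c d p = q \<longleftrightarrow> (\<exists>l. l \<noteq> 0 \<and> mat_apply a b c d (hvec p) = scale l (hvec q))"
  using mat_apply_hvec[OF assms, of p] scale_hvec_eq_scale_hvec by metis

lemma inj_lft:
  assumes "a * d - b * c \<noteq> 0"
  shows "inj (lft a b c d)"
proof (rule injI)
  fix p q
  assume "lft a b c d p = lft a b c d q"
  moreover obtain l m where "l \<noteq> 0" "m \<noteq> 0"
    "mat_apply a b c d (hvec p) = scale l (hvec (lft a b c d p))"
    "mat_apply a b c d (hvec q) = scale m (hvec (lft a b c d q))"
    using mat_apply_hvec[OF assms] by metis
  ultimately have "(a * d - b * c) * det2 (hvec p) (hvec q) = 0"
    using det2_mat_apply[of a b c d "hvec p" "hvec q"] det2_hvec_eq_0_iff by simp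
  with assms show "p = q" by (simp add: det2_hvec_eq_0_iff)
qed

lemma det_mult:
  "(a * a' + b * c') * (c * b' + d * d') - (a * b' + b * d') * (c * a' + d * c') =
   (a * d - b * c) * (a' * d' - b' * c')" for a b c d a' b' c' d' :: "'a::field"
  by (simp add: algebra_simps)

lemma lft_lft:
  assumes "a * d - b * c \<noteq> 0" "a' * d' - b' * c' \<noteq> 0"
  shows "lft a b c d (lft a' b' c' d' p) =
    lft (a * a' + b * c') (a * b' + b * d') (c * a' + d * c') (c * b' + d * d') p"
proof -
  obtain l where l: "l \<noteq> 0" "mat_apply a' b' c' d' (hvec p) = scale l (hvec (lft a' b' c' d' p))"
    using mat_apply_hvec[OF assms(2)] by blast
  obtain m where m: "m \<noteq> 0"
    "mat_apply a b c d (hvec (lft a' b' c' d' p)) = scale m (hvec (lft a b c d (lft a' b' c' d' p)))"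
    using mat_apply_hvec[OF assms(1)] by blast
  have "mat_apply (a * a' + b * c') (a * b' + b * d') (c * a' + d * c') (c * b' + d * d') (hvec p) =
    mat_apply a b c d (mat_apply a' b' c' d' (hvec p))"
    by (simp add: mat_apply_mat_apply)
  also have "\<dots> = scale l (mat_apply a b c d (hvec (lft a' b' c' d' p)))"
    by (simp add: l(2) mat_apply_scale)
  also have "\<dots> = scale (l * m) (hvec (lft a b c d (lft a' b' c' d' p)))"
    by (simp add: m(2) scale_def)
  finally have "mat_apply (a * a' + b * c') (a * b' + b * d') (c * a' + d * c') (c * b' + d * d') (hvec p) =
    scale (l * m) (hvec (lft a b c d (lft a' b' c' d' p)))" .
  moreover have "l * m \<noteq> 0" using l m by simp
  moreover have det: "(a * a' + b * c') * (c * b' + d * d') - (a * b' + b * d') * (c * a' + d * c') \<noteq> 0"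
    using assms by (simp add: det_mult)
  ultimately show ?thesis
    using lft_eq_iff[OF det] by metis
qed

lemma psl_maps_iff:
  "g \<in> psl_maps \<longleftrightarrow> (\<exists>a b c d. g = lft a b c d \<and> qchi (a * d - b * c) = 1)"
  unfolding psl_maps_def qchi_eq_1_iff by blast

lemma id_in_psl_maps: "id \<in> psl_maps"
proof -
  have "id = lft (1::'a::field) 0 0 1"
    by (auto simp: lft_def split: option.split)
  then show ?thesis
    unfolding psl_maps_iff by (metis qchi_one mult_1 diff_zero mult_zero_left)
qed

lemma psl_mapsE:
  assumes "g \<in> psl_maps"
  obtains a b c d where "g = lft a b c d" "a * d - b * c \<noteq> 0" "qchi (a * d - b * c) = 1"
proof -
  from assms obtain a b c d where "g = lft a b c d" "qchi (a * d - b * c) = 1"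
    unfolding psl_maps_iff by blast
  moreover from this(2) have "a * d - b * c \<noteq> 0"
    by (auto simp: qchi_def)
  ultimately show thesis using that by blast
qed

lemma inj_psl_maps: "g \<in> psl_maps \<Longrightarrow> inj g"
  by (metis psl_mapsE inj_lft)

lemma inj_on_image_psl_maps: "g \<in> psl_maps \<Longrightarrow> inj_on ((`) g) X"
  by (rule inj_on_image) (meson inj_psl_maps inj_on_subset subset_UNIV)

lemma card_psl_orbit_member:
  assumes "Bl \<in> psl_orbit S"
  shows "card Bl = card S"
proof -
  obtain g where "g \<in> psl_maps" "Bl = g ` S"
    using assms unfolding psl_orbit_def by blast
  then show ?thesis
    using card_image[OF inj_on_subset[OF inj_psl_maps subset_UNIV]] by simp
qed

lemma psl_orbit_refl: "S \<in> psl_orbit S"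
proof -
  have "S = id ` S" by simp
  then show ?thesis
    using id_in_psl_maps unfolding psl_orbit_def by blast
qed

lemma card_psl_orbit_neq_0: "card (psl_orbit (S :: 'a::{finite,field} option set)) \<noteq> 0"
  using psl_orbit_refl by (auto simp: card_eq_0_iff)

text \<open>For finite points det2 (hvec x) (hvec y) = x - y, so triple_det is the product
  (x - y)(y - z)(z - x) of the paper, extended to the point at infinity.\<close>

definition triple_det :: "'a::field option \<Rightarrow> 'a option \<Rightarrow> 'a option \<Rightarrow> 'a" where
  "triple_det p q r = det2 (hvec p) (hvec q) * det2 (hvec q) (hvec r) * det2 (hvec r) (hvec p)"

definition tri_sign :: "'a::field option \<Rightarrow> 'a option \<Rightarrow> 'a option \<Rightarrow> int" where
  "tri_sign p q r = qchi (triple_det p q r)"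

definition tri_sign_set :: "'a::field option set \<Rightarrow> int" where
  "tri_sign_set T = (SOME s. \<exists>p q r. T = {p, q, r} \<and> s = tri_sign p q r)"

lemma triple_det_eq_0_iff: "triple_det p q r = 0 \<longleftrightarrow> p = q \<or> q = r \<or> r = p"
  by (simp add: triple_det_def det2_hvec_eq_0_iff)

lemma triple_det_swap: "triple_det q p r = - triple_det p q r"
  unfolding triple_det_def
  using det2_swap[of "hvec p" "hvec q"] det2_swap[of "hvec p" "hvec r"] det2_swap[of "hvec q" "hvec r"]
  by (simp add: algebra_simps)

lemma triple_det_rotate: "triple_det q r p = triple_det p q r"
  by (simp add: triple_det_def ac_simps)

lemma triple_det_lft:
  assumes "a * d - b * c \<noteq> 0"
  shows "\<exists>L. L \<noteq> 0 \<and>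
    L ^ 2 * triple_det (lft a b c d p) (lft a b c d q) (lft a b c d r) = (a * d - b * c) ^ 3 * triple_det p q r"
proof -
  let ?M = "mat_apply a b c d" and ?g = "lft a b c d"
  have det2_image: "l * m * det2 (hvec (?g x)) (hvec (?g y)) = (a * d - b * c) * det2 (hvec x) (hvec y)"
    if "?M (hvec x) = scale l (hvec (?g x))" "?M (hvec y) = scale m (hvec (?g y))" for x y l m
    using det2_mat_apply[of a b c d "hvec x" "hvec y"] that by (simp add: ac_simps)
  obtain l m n where "l \<noteq> 0" "m \<noteq> 0" "n \<noteq> 0" and
    lmn: "?M (hvec p) = scale l (hvec (?g p))" "?M (hvec q) = scale m (hvec (?g q))"
      "?M (hvec r) = scale n (hvec (?g r))"
    using mat_apply_hvec[OF assms] by metis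
  have "(l * m * n) ^ 2 * triple_det (?g p) (?g q) (?g r) =
    (l * m * det2 (hvec (?g p)) (hvec (?g q))) * (m * n * det2 (hvec (?g q)) (hvec (?g r))) *
    (n * l * det2 (hvec (?g r)) (hvec (?g p)))"
    by (simp add: triple_det_def power2_eq_square ac_simps)
  also have "\<dots> = (a * d - b * c) ^ 3 * triple_det p q r"
    unfolding det2_image[OF lmn(1,2)] det2_image[OF lmn(2,3)] det2_image[OF lmn(3,1)]
    by (simp add: triple_det_def power3_eq_cube ac_simps)
  finally have "(l * m * n) ^ 2 * triple_det (?g p) (?g q) (?g r) = (a * d - b * c) ^ 3 * triple_det p q r" .
  moreover have "l * m * n \<noteq> 0" using \<open>l \<noteq> 0\<close> \<open>m \<noteq> 0\<close> \<open>n \<noteq> 0\<close> by simp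
  ultimately show ?thesis by blast
qed

lemma tri_sign_rotate: "tri_sign q r p = tri_sign p q r"
  by (simp add: tri_sign_def triple_det_rotate)

definition sign_class :: "int \<Rightarrow> 'a::field option set set" where
  "sign_class e = {T. card T = 3 \<and> tri_sign_set T = e}"

context
  assumes q_mod4: "card (UNIV :: 'a::{finite,field} set) mod 4 = 1"
begin

lemma odd_card: "odd (card (UNIV :: 'a set))"
  using q_mod4 by presburger

lemma two_neq_zero: "(2::'a) \<noteq> 0"
proof
  assume "(2::'a) = 0"
  then have "x + 1 + 1 = x" for x :: 'a
    by (simp add: add.assoc)
  then have "even (card (UNIV :: 'a set))"
    by (intro even_card_involution[where f = "\<lambda>x. x + 1"]) simp_all
  with odd_card show False by simp
qed

lemma card_nonzero_squares: "card (-{0::'a}) = 2 * card (nonzero_squares :: 'a set)"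
proof -
  have "card {y \<in> -{0}. y ^ 2 = x ^ 2} = 2" if "x \<in> -{0::'a}" for x
  proof -
    have "{y \<in> -{0}. y ^ 2 = x ^ 2} = {x, -x}"
      using that by (auto simp: power2_eq_iff)
    moreover have "x \<noteq> -x"
    proof
      assume "x = -x"
      then have "2 * x = 0" by (metis mult_2 add.right_inverse)
      with that two_neq_zero show False by simp
    qed
    ultimately show ?thesis by simp
  qed
  then have "card (-{0::'a}) = 2 * card ((\<lambda>y. y ^ 2) ` (-{0::'a}))"
    by (intro card_eq_twice_card_image) simp_all
  moreover have "(\<lambda>y. y ^ 2) ` (-{0::'a}) = nonzero_squares"
    unfolding nonzero_squares_def by auto
  ultimately show ?thesis by simp
qed

lemma ex_nonsquare: "\<exists>v::'a. v \<noteq> 0 \<and> v \<notin> nonzero_squares"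
proof (rule ccontr)
  assume "\<nexists>v::'a. v \<noteq> 0 \<and> v \<notin> nonzero_squares"
  then have "-{0} = (nonzero_squares :: 'a set)"
    unfolding nonzero_squares_def by auto
  then have "card (nonzero_squares :: 'a set) = 0"
    using card_nonzero_squares by simp
  then show False
    using one_in_nonzero_squares card_0_eq[OF finite] by blast
qed

lemma nonsquare_mult_nonsquare:
  assumes "v \<noteq> 0" "v \<notin> nonzero_squares" "w \<noteq> 0" "(w::'a) \<notin> nonzero_squares"
  shows "v * w \<in> nonzero_squares"
proof -
  define nonsquares where "nonsquares = -{0::'a} - nonzero_squares"
  have "nonzero_squares \<subseteq> -{0::'a}"
    by (auto simp: nonzero_squares_def)
  then have card_nonsquares: "card nonsquares = card (nonzero_squares :: 'a set)"
    using card_nonzero_squares by (simp add: nonsquares_def card_Diff_subset)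
  have "v * x \<in> nonsquares" if "x \<in> nonzero_squares" for x
  proof -
    have "x \<noteq> 0" using that by (simp add: nonzero_squares_def)
    moreover have "x * v \<notin> nonzero_squares"
      using nonzero_squares_cancel[OF that] assms(2) by blast
    ultimately show ?thesis
      using assms(1) by (simp add: nonsquares_def mult.commute)
  qed
  then have "(*) v ` nonzero_squares \<subseteq> nonsquares" by auto
  moreover have "inj_on ((*) v) nonzero_squares"
    using assms(1) by (auto intro: inj_onI)
  ultimately have "(*) v ` nonzero_squares = nonsquares"
    using card_nonsquares by (intro card_subset_eq) (simp_all add: card_image)
  moreover have "w \<in> nonsquares"
    using assms(3,4) by (simp add: nonsquares_def)
  ultimately obtain x where "x \<in> nonzero_squares" "w = v * x" by blast
  moreover have "v ^ 2 \<in> nonzero_squares"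
    using assms(1) by (auto simp: nonzero_squares_def)
  ultimately show ?thesis
    using nonzero_squares_mult by (fastforce simp: power2_eq_square mult.assoc)
qed

lemma qchi_mult: "qchi (x * y :: 'a) = qchi x * qchi y"
proof (cases "x = 0 \<or> y = 0")
  case True
  then show ?thesis by (auto simp: qchi_def)
next
  case False
  have "x * y \<in> nonzero_squares \<longleftrightarrow> (x \<in> nonzero_squares \<longleftrightarrow> y \<in> nonzero_squares)"
  proof (cases "x \<in> nonzero_squares")
    case True
    then show ?thesis
      using nonzero_squares_mult nonzero_squares_cancel by blast
  next
    case False
    moreover have "y * x \<in> nonzero_squares \<Longrightarrow> y \<in> nonzero_squares \<Longrightarrow> x \<in> nonzero_squares"
      using nonzero_squares_cancel by blast
    ultimately show ?thesis
      using nonsquare_mult_nonsquare[of x y] \<open>\<not> (x = 0 \<or> y = 0)\<close> by (auto simp: mult.commute)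
  qed
  then show ?thesis
    using False by (simp add: qchi_eq_if)
qed

lemma minus_one_in_nonzero_squares: "(-1::'a) \<in> nonzero_squares"
proof (rule ccontr)
  assume minus_one: "(-1::'a) \<notin> nonzero_squares"
  \<comment> \<open>then inversion has no fixed point on the squares other than 1, whose number (q - 1)/2 is even\<close>
  have "even (card (nonzero_squares - {1::'a}))"
  proof (rule even_card_involution[where f = inverse])
    fix x :: 'a
    assume x: "x \<in> nonzero_squares - {1}"
    then have "x \<noteq> 0" by (simp add: nonzero_squares_def)
    have "inverse x \<noteq> x"
    proof
      assume "inverse x = x"
      then have "x ^ 2 = 1"
        using \<open>x \<noteq> 0\<close> by (metis power2_eq_square right_inverse)
      then show False
        using x minus_one by (auto simp: power2_eq_1_iff)
    qed
    then show "inverse x \<in> nonzero_squares - {1} \<and> inverse x \<noteq> x \<and> inverse (inverse x) = x"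
      using x nonzero_squares_inverse by auto
  qed simp
  moreover have "2 * card (nonzero_squares :: 'a set) = card (UNIV :: 'a set) - 1"
    using card_nonzero_squares
    by (simp add: Compl_eq_Diff_UNIV card_Diff_singleton)
  then have "even (card (nonzero_squares :: 'a set))"
    using q_mod4 by presburger
  moreover have "card (nonzero_squares - {1::'a}) = card (nonzero_squares :: 'a set) - 1"
    using one_in_nonzero_squares[where 'a = 'a] by (simp add: card_Diff_singleton)
  moreover have "card (nonzero_squares :: 'a set) > 0"
    using one_in_nonzero_squares[where 'a = 'a] by (auto simp: card_gt_0_iff)
  ultimately show False by presburger
qed

lemma qchi_uminus: "qchi (- x :: 'a) = qchi x"
  using qchi_mult[of "-1" x] minus_one_in_nonzero_squares
  by (simp add: qchi_eq_if)

lemma ex_qchi_eq: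
  assumes "e = 1 \<or> e = -1"
  shows "\<exists>t::'a. t \<noteq> 0 \<and> qchi t = e"
  using assms
proof
  assume "e = 1"
  then show ?thesis
    using qchi_one by (intro exI[of _ 1]) simp
next
  assume "e = -1"
  moreover obtain v :: 'a where "v \<noteq> 0" "v \<notin> nonzero_squares"
    using ex_nonsquare by blast
  ultimately show ?thesis
    by (intro exI[of _ v]) (simp add: qchi_eq_if)
qed

lemma psl_maps_comp:
  assumes "g \<in> psl_maps" "(h :: 'a option \<Rightarrow> 'a option) \<in> psl_maps"
  shows "g \<circ> h \<in> psl_maps"
proof -
  obtain a b c d where g: "g = lft a b c d" "a * d - b * c \<noteq> 0" "qchi (a * d - b * c) = 1"
    using assms(1) by (rule psl_mapsE)
  obtain a' b' c' d' where h: "h = lft a' b' c' d'" "a' * d' - b' * c' \<noteq> 0" "qchi (a' * d' - b' * c') = 1"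
    using assms(2) by (rule psl_mapsE)
  have "g \<circ> h = lft (a * a' + b * c') (a * b' + b * d') (c * a' + d * c') (c * b' + d * d')"
    using g h by (simp add: fun_eq_iff lft_lft)
  moreover have "qchi ((a * a' + b * c') * (c * b' + d * d') - (a * b' + b * d') * (c * a' + d * c')) = 1"
    using g h by (simp add: det_mult qchi_mult)
  ultimately show ?thesis
    unfolding psl_maps_iff by blast
qed

lemma psl_orbit_image:
  fixes S :: "'a option set"
  assumes "g \<in> psl_maps"
  shows "(`) g ` psl_orbit S = psl_orbit S"
proof (rule endo_inj_surj)
  show "(`) g ` psl_orbit S \<subseteq> psl_orbit S"
  proof
    fix X
    assume "X \<in> (`) g ` psl_orbit S"
    then obtain h where "h \<in> psl_maps" "X = (g \<circ> h) ` S"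
      unfolding psl_orbit_def by (auto simp: image_comp)
    then show "X \<in> psl_orbit S"
      using psl_maps_comp[OF assms] unfolding psl_orbit_def by blast
  qed
  show "inj_on ((`) g) (psl_orbit S)"
    using assms by (rule inj_on_image_psl_maps)
qed simp

lemma tri_sign_lft:
  assumes "a * d - b * c \<noteq> (0::'a)"
  shows "tri_sign (lft a b c d p) (lft a b c d q) (lft a b c d r) = qchi (a * d - b * c) * tri_sign p q r"
proof -
  obtain L where "L \<noteq> 0"
    and L: "L ^ 2 * triple_det (lft a b c d p) (lft a b c d q) (lft a b c d r) =
      (a * d - b * c) ^ 2 * ((a * d - b * c) * triple_det p q r)"
    using triple_det_lft[OF assms] by (metis power3_eq_cube power2_eq_square mult.assoc)
  have "tri_sign (lft a b c d p) (lft a b c d q) (lft a b c d r) =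
    qchi ((a * d - b * c) ^ 2 * ((a * d - b * c) * triple_det p q r))"
    unfolding tri_sign_def L[symmetric] qchi_square_mult[OF \<open>L \<noteq> 0\<close>] ..
  also have "\<dots> = qchi (a * d - b * c) * tri_sign p q r"
    unfolding tri_sign_def qchi_square_mult[OF assms] by (rule qchi_mult)
  finally show ?thesis .
qed

lemma tri_sign_swap: "tri_sign q p r = tri_sign p q (r :: 'a option)"
  unfolding tri_sign_def triple_det_swap[of q p r] by (rule qchi_uminus)

lemma tri_sign_perm:
  assumes "{p', q', r'} = {p, q, r :: 'a option}" "p \<noteq> q" "q \<noteq> r" "r \<noteq> p"
  shows "tri_sign p' q' r' = tri_sign p q r"
proof -
  have "card {p', q', r'} = 3"
    using assms by simp
  then have "p' \<noteq> q'" "q' \<noteq> r'" "r' \<noteq> p'"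
    by (auto simp: card_insert_if split: if_splits)
  moreover have "p' \<in> {p, q, r}" "q' \<in> {p, q, r}" "r' \<in> {p, q, r}"
    using assms(1) by blast+
  moreover have "tri_sign q p r = tri_sign p q r" "tri_sign q r p = tri_sign p q r"
    "tri_sign r p q = tri_sign p q r" "tri_sign p r q = tri_sign p q r" "tri_sign r q p = tri_sign p q r"
    using tri_sign_swap tri_sign_rotate by metis+
  ultimately show ?thesis by auto
qed

lemma tri_sign_set_eq:
  assumes "T = {p, q, r :: 'a option}" "p \<noteq> q" "q \<noteq> r" "r \<noteq> p"
  shows "tri_sign_set T = tri_sign p q r"
proof -
  have "\<exists>p' q' r'. T = {p', q', r'} \<and> tri_sign_set T = tri_sign p' q' r'"
    unfolding tri_sign_set_def by (rule someI_ex) (use assms(1) in blast)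
  then show ?thesis
    using tri_sign_perm assms by metis
qed

lemma tri_sign_set_cases:
  assumes "card T = 3"
  shows "tri_sign_set T = 1 \<or> tri_sign_set (T :: 'a option set) = -1"
proof -
  obtain p q r where pqr: "T = {p, q, r}" "p \<noteq> q" "q \<noteq> r" "r \<noteq> p"
    using assms card_3_iff by metis
  then have "triple_det p q r \<noteq> 0"
    by (simp add: triple_det_eq_0_iff)
  then show ?thesis
    using tri_sign_set_eq[OF pqr] qchi_neq_0 by (simp add: tri_sign_def)
qed

lemma tri_sign_set_lft_image:
  assumes "a * d - b * c \<noteq> (0::'a)" "card T = 3"
  shows "tri_sign_set (lft a b c d ` T) = qchi (a * d - b * c) * tri_sign_set T"
proof -
  obtain p q r where pqr: "T = {p, q, r}" "p \<noteq> q" "q \<noteq> r" "r \<noteq> p"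
    using assms(2) card_3_iff by metis
  have "inj (lft a b c d)"
    using assms(1) by (rule inj_lft)
  then have "tri_sign_set (lft a b c d ` T) = tri_sign (lft a b c d p) (lft a b c d q) (lft a b c d r)"
    using pqr by (intro tri_sign_set_eq) (auto dest: injD)
  then show ?thesis
    using tri_sign_set_eq[OF pqr] tri_sign_lft[OF assms(1)] by simp
qed

lemma tri_sign_set_psl_image:
  assumes "g \<in> psl_maps" "card T = 3"
  shows "tri_sign_set (g ` T) = tri_sign_set (T :: 'a option set)"
  using assms(1) by (rule psl_mapsE) (simp add: tri_sign_set_lft_image[OF _ assms(2)])

lemma tri_sign_set_standard:
  assumes "(t::'a) \<noteq> 0"
  shows "tri_sign_set {None, Some 0, Some t} = qchi t"
proof -
  have "triple_det None (Some 0) (Some t) = t"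
    by (simp add: triple_det_def det2_def hvec_def)
  then show ?thesis
    using assms by (subst tri_sign_set_eq[of _ None "Some 0" "Some t"]) (simp_all add: tri_sign_def)
qed

lemma tri_chi_eq_tri_sign_set:
  assumes "card (S :: 'a set) = 3"
  shows "tri_chi S = tri_sign_set (Some ` S)"
proof -
  obtain x0 y0 z0 where "S = {x0, y0, z0}"
    using assms card_3_iff by metis
  then have ex: "\<exists>t. case t of (x, y, z) \<Rightarrow> S = {x, y, z}"
    by (intro exI[of _ "(x0, y0, z0)"]) simp
  obtain x y z where chosen: "(SOME t. case t of (x, y, z) \<Rightarrow> S = {x, y, z}) = (x, y, z)"
    by (metis prod_cases3)
  have xyz: "(SOME t. case t of (x, y, z) \<Rightarrow> S = {x, y, z}) = (x, y, z)" "S = {x, y, z}"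
    using chosen someI_ex[OF ex] by simp_all
  then have "x \<noteq> y" "y \<noteq> z" "z \<noteq> x"
    using assms by (auto simp: card_insert_if split: if_splits)
  then have "tri_sign_set (Some ` S) = tri_sign (Some x) (Some y) (Some z)"
    using xyz(2) by (intro tri_sign_set_eq) auto
  also have "\<dots> = tri_chi S"
    unfolding tri_chi_def xyz(1) by (simp add: tri_sign_def triple_det_def det2_def hvec_def)
  finally show ?thesis ..
qed

lemma psl_maps_standard_triple:
  assumes "p \<noteq> q" "q \<noteq> r" "r \<noteq> p" "t \<noteq> 0" "qchi t = tri_sign p q (r :: 'a option)"
  shows "\<exists>g\<in>psl_maps. g None = p \<and> g (Some 0) = q \<and> g (Some t) = r"
proof -
  define P Q R where "P = hvec p" and "Q = hvec q" and "R = hvec r"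
  define \<alpha> \<beta> w where "\<alpha> = det2 R Q" and "\<beta> = det2 P R" and "w = det2 P Q"
  have "\<alpha> \<noteq> 0" "\<beta> \<noteq> 0" "w \<noteq> 0"
    using assms(1-3) by (auto simp: \<alpha>_def \<beta>_def w_def P_def Q_def R_def det2_hvec_eq_0_iff)
  \<comment> \<open>By Cramer's rule w R = \<alpha> P + \<beta> Q, so the matrix with columns \<alpha> P and t \<beta> Q
    sends infinity, 0, t to p, q, r; its determinant is t * triple_det p q r.\<close>
  define a b c d where "a = \<alpha> * fst P" and "b = t * \<beta> * fst Q"
    and "c = \<alpha> * snd P" and "d = t * \<beta> * snd Q"
  have "a * d - b * c = t * triple_det p q r"
    unfolding a_def b_def c_def d_def \<alpha>_def \<beta>_def triple_det_def P_def Q_def R_def by (simp add: det2_def algebra_simps)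
  moreover have "triple_det p q r \<noteq> 0"
    using assms(1-3) by (simp add: triple_det_eq_0_iff)
  ultimately have det: "a * d - b * c \<noteq> 0" "qchi (a * d - b * c) = 1"
    using assms(4,5) qchi_neq_0[of t] by (auto simp: qchi_mult tri_sign_def)
  have "w * fst R = \<alpha> * fst P + \<beta> * fst Q" "w * snd R = \<alpha> * snd P + \<beta> * snd Q"
    by (simp_all add: \<alpha>_def \<beta>_def w_def det2_def algebra_simps)
  then have image_t: "mat_apply a b c d (hvec (Some t)) = scale (t * w) R"
    by (simp add: mat_apply_def hvec_def scale_def a_def b_def c_def d_def algebra_simps)
  have image_None: "mat_apply a b c d (hvec None) = scale \<alpha> P"
    by (simp add: mat_apply_def hvec_def scale_def a_def c_def)
  have image_0: "mat_apply a b c d (hvec (Some 0)) = scale (t * \<beta>) Q"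
    by (simp add: mat_apply_def hvec_def scale_def b_def d_def)
  have "lft a b c d None = p" "lft a b c d (Some 0) = q" "lft a b c d (Some t) = r"
    unfolding lft_eq_iff[OF det(1)]
    using image_None image_0 image_t \<open>\<alpha> \<noteq> 0\<close> \<open>\<beta> \<noteq> 0\<close> \<open>w \<noteq> 0\<close> assms(4)
    unfolding P_def Q_def R_def by (metis mult_eq_0_iff)+
  moreover have "lft a b c d \<in> psl_maps"
    using det(2) unfolding psl_maps_iff by blast
  ultimately show ?thesis by blast
qed

lemma psl_maps_standard_triple_image:
  assumes "card T = 3" "t \<noteq> 0" "qchi t = tri_sign_set (T :: 'a option set)"
  shows "\<exists>g\<in>psl_maps. g ` {None, Some 0, Some t} = T"
proof -
  obtain p q r where pqr: "T = {p, q, r}" "p \<noteq> q" "q \<noteq> r" "r \<noteq> p"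
    using assms(1) card_3_iff by metis
  then obtain g where "g \<in> psl_maps" "g None = p" "g (Some 0) = q" "g (Some t) = r"
    using psl_maps_standard_triple assms(2,3) tri_sign_set_eq by metis
  with pqr(1) show ?thesis by auto
qed

lemma sign_class_standard: "(t::'a) \<noteq> 0 \<Longrightarrow> {None, Some 0, Some t} \<in> sign_class (qchi t)"
  by (simp add: sign_class_def tri_sign_set_standard)

lemma psl_image_sign_class:
  assumes "g \<in> psl_maps"
  shows "(`) g ` sign_class e = (sign_class e :: 'a option set set)"
proof (rule endo_inj_surj)
  show "(`) g ` sign_class e \<subseteq> sign_class e"
    using inj_psl_maps[OF assms] tri_sign_set_psl_image[OF assms]
    by (auto simp: sign_class_def card_image inj_on_subset)
  show "inj_on ((`) g) (sign_class e)"
    using assms by (rule inj_on_image_psl_maps)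
qed simp

lemma card_blocks_through_psl_image:
  assumes "g \<in> psl_maps"
  shows "card {Bl \<in> psl_orbit S. g ` T \<subseteq> Bl} = card {Bl \<in> psl_orbit S. T \<subseteq> (Bl :: 'a option set)}"
proof -
  have "card {Bl \<in> psl_orbit S. g ` T \<subseteq> g ` Bl} = card {Bl \<in> psl_orbit S. g ` T \<subseteq> Bl}"
    using card_filter_image_eq[OF inj_on_image_psl_maps[OF assms] psl_orbit_image[OF assms],
        where P = "\<lambda>Bl. g ` T \<subseteq> Bl"] by simp
  then show ?thesis
    by (simp add: inj_image_subset_iff[OF inj_psl_maps[OF assms]])
qed

lemma card_blocks_through_sign_class:
  assumes "T \<in> sign_class e" "T' \<in> sign_class e"
  shows "card {Bl \<in> psl_orbit S. T \<subseteq> Bl} = card {Bl \<in> psl_orbit S. T' \<subseteq> (Bl :: 'a option set)}"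
proof -
  have T: "card T = 3" "tri_sign_set T = e" and T': "card T' = 3" "tri_sign_set T' = e"
    using assms by (simp_all add: sign_class_def)
  then obtain t :: 'a where "t \<noteq> 0" "qchi t = e"
    using ex_qchi_eq tri_sign_set_cases by blast
  then obtain g g' where g: "g \<in> psl_maps" "g ` {None, Some 0, Some t} = T"
    and g': "g' \<in> psl_maps" "g' ` {None, Some 0, Some t} = T'"
    using psl_maps_standard_triple_image T T' by metis
  have "card {Bl \<in> psl_orbit S. T \<subseteq> Bl} = card {Bl \<in> psl_orbit S. {None, Some 0, Some t} \<subseteq> Bl}"
    using card_blocks_through_psl_image[OF g(1), of S "{None, Some 0, Some t}"] unfolding g(2) .
  also have "\<dots> = card {Bl \<in> psl_orbit S. T' \<subseteq> Bl}"
    using card_blocks_through_psl_image[OF g'(1), of S "{None, Some 0, Some t}"] unfolding g'(2) ..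
  finally show ?thesis .
qed

lemma card_sign_class_subsets_psl_image:
  assumes "g \<in> psl_maps"
  shows "card {T \<in> sign_class e. T \<subseteq> g ` S} = card {T \<in> sign_class e. T \<subseteq> (S :: 'a option set)}"
proof -
  have "card {T \<in> sign_class e. g ` T \<subseteq> g ` S} = card {T \<in> sign_class e. T \<subseteq> g ` S}"
    using card_filter_image_eq[OF inj_on_image_psl_maps[OF assms] psl_image_sign_class[OF assms],
        where P = "\<lambda>T. T \<subseteq> g ` S"] by simp
  then show ?thesis
    by (simp add: inj_image_subset_iff[OF inj_psl_maps[OF assms]])
qed

lemma sum_card_blocks_through:
  "(\<Sum>T\<in>sign_class e. card {Bl \<in> psl_orbit S. T \<subseteq> Bl}) =
    card (psl_orbit S) * card {T \<in> sign_class e. T \<subseteq> (S :: 'a option set)}"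
proof -
  have "(\<Sum>T\<in>sign_class e. card {Bl \<in> psl_orbit S. T \<subseteq> Bl}) =
    (\<Sum>Bl\<in>psl_orbit S. card {T \<in> sign_class e. T \<subseteq> Bl})"
    by (rule sum_card_filter_swap) simp_all
  also have "\<dots> = (\<Sum>Bl\<in>psl_orbit S. card {T \<in> sign_class e. T \<subseteq> S})"
  proof (rule sum.cong)
    fix Bl
    assume "Bl \<in> psl_orbit S"
    then obtain g where "g \<in> psl_maps" "Bl = g ` S"
      unfolding psl_orbit_def by blast
    then show "card {T \<in> sign_class e. T \<subseteq> Bl} = card {T \<in> sign_class e. T \<subseteq> S}"
      using card_sign_class_subsets_psl_image by simp
  qed simp
  finally show ?thesis by simp
qed

lemma card_sign_class_le: "card (sign_class e :: 'a option set set) \<le> card (sign_class (-e) :: 'a option set set)"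
proof -
  obtain v :: 'a where "v \<noteq> 0" "qchi v = -1"
    using ex_qchi_eq by blast
  then have det: "v * 1 - 0 * 0 \<noteq> 0" by simp
  have "(`) (lft v 0 0 1) ` sign_class e \<subseteq> sign_class (-e)"
    using tri_sign_set_lft_image[OF det] inj_lft[OF det] \<open>qchi v = -1\<close>
    by (auto simp: sign_class_def card_image inj_on_subset)
  moreover have "inj_on ((`) (lft v 0 0 1)) (sign_class e)"
    using inj_lft[OF det] by (meson inj_on_image inj_on_subset subset_UNIV)
  ultimately show ?thesis
    by (intro card_inj_on_le) simp_all
qed

lemma card_sign_class_uminus: "card (sign_class (-1) :: 'a option set set) = card (sign_class 1 :: 'a option set set)"
  using card_sign_class_le[of 1] card_sign_class_le[of "-1"] by simp

lemma card_sign_class_mult_card_blocks_through: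
  assumes "T \<in> sign_class e"
  shows "card (sign_class e :: 'a option set set) * card {Bl \<in> psl_orbit S. T \<subseteq> Bl} =
    card (psl_orbit S) * card {T \<in> sign_class e. T \<subseteq> (S :: 'a option set)}"
proof -
  have "(\<Sum>T'\<in>sign_class e. card {Bl \<in> psl_orbit S. T' \<subseteq> Bl}) =
    card (sign_class e :: 'a option set set) * card {Bl \<in> psl_orbit S. T \<subseteq> Bl}"
    using card_blocks_through_sign_class[OF _ assms] by simp
  then show ?thesis
    using sum_card_blocks_through[of S e] by simp
qed

lemma card_blocks_through_eq_iff:
  assumes "T1 \<in> sign_class 1" "Tm \<in> sign_class (-1)"
  shows "card {Bl \<in> psl_orbit S. T1 \<subseteq> Bl} = card {Bl \<in> psl_orbit S. Tm \<subseteq> Bl} \<longleftrightarrow>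
    card {T \<in> sign_class 1. T \<subseteq> S} = card {T \<in> sign_class (-1). T \<subseteq> (S :: 'a option set)}"
    (is "?N1 = ?Nm \<longleftrightarrow> ?A1 = ?Am")
proof -
  let ?c = "card (sign_class 1 :: 'a option set set)"
  have "?c \<noteq> 0"
    using assms(1) by (auto simp: card_eq_0_iff)
  then have "?N1 = ?Nm \<longleftrightarrow> ?c * ?N1 = ?c * ?Nm"
    by (rule mult_left_cancel[symmetric])
  also have "\<dots> \<longleftrightarrow> card (psl_orbit S) * ?A1 = card (psl_orbit S) * ?Am"
    using card_sign_class_mult_card_blocks_through[OF assms(1), of S]
      card_sign_class_mult_card_blocks_through[OF assms(2), of S] card_sign_class_uminus
    by simp
  also have "\<dots> \<longleftrightarrow> ?A1 = ?Am"
    by (rule mult_left_cancel[OF card_psl_orbit_neq_0])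
  finally show ?thesis .
qed

lemma card_blocks_through_pos:
  assumes "card S \<ge> 3"
    and "card {T \<in> sign_class 1. T \<subseteq> S} = card {T \<in> sign_class (-1). T \<subseteq> (S :: 'a option set)}"
    and "T1 \<in> sign_class 1"
  shows "card {Bl \<in> psl_orbit S. T1 \<subseteq> Bl} > 0"
proof -
  obtain T0 where "T0 \<subseteq> S" "card T0 = 3"
    using assms(1) obtain_subset_with_card_n[of 3 S] by auto
  then have "card {T \<in> sign_class (tri_sign_set T0). T \<subseteq> S} > 0"
    by (auto simp: card_gt_0_iff sign_class_def)
  then have "card {T \<in> sign_class 1. T \<subseteq> S} > 0"
    using tri_sign_set_cases[OF \<open>card T0 = 3\<close>] assms(2) by auto
  then have "card (psl_orbit S) * card {T \<in> sign_class 1. T \<subseteq> S} \<noteq> 0"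
    using card_psl_orbit_neq_0[of S] by (metis mult_is_0 not_gr0)
  then show ?thesis
    using card_sign_class_mult_card_blocks_through[OF assms(3), of S] by (metis mult_0_right neq0_conv)
qed

lemma is_3design_psl_orbit_iff:
  assumes "card S = k" "k \<ge> 3"
  shows "is_3design UNIV k (psl_orbit S) \<longleftrightarrow>
    card {T \<in> sign_class 1. T \<subseteq> S} = card {T \<in> sign_class (-1). T \<subseteq> (S :: 'a option set)}"
    (is "_ \<longleftrightarrow> ?A 1 = ?A (-1)")
proof -
  let ?N = "\<lambda>T. card {Bl \<in> psl_orbit S. T \<subseteq> Bl}"
  obtain v :: 'a where "v \<noteq> 0" "qchi v = -1"
    using ex_qchi_eq by blast
  define T1 Tm where "T1 = {None, Some 0, Some (1::'a)}" and "Tm = {None, Some 0, Some v}"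
  have T1: "T1 \<in> sign_class 1" and Tm: "Tm \<in> sign_class (-1)"
    using sign_class_standard[of 1] sign_class_standard[OF \<open>v \<noteq> 0\<close>]
    by (simp_all add: T1_def Tm_def qchi_one \<open>qchi v = -1\<close>)
  have uniform: "?N T = ?N T1" if "card T = 3" "?N T1 = ?N Tm" for T
    using tri_sign_set_cases[OF that(1)] card_blocks_through_sign_class[OF _ T1, of T S]
      card_blocks_through_sign_class[OF _ Tm, of T S] that
    by (auto simp: sign_class_def)
  have positive: "?N T1 > 0" if "?A 1 = ?A (-1)"
    using card_blocks_through_pos[OF _ that T1] assms by simp
  have "Bl \<subseteq> UNIV \<and> card Bl = k" if "Bl \<in> psl_orbit S" for Bl
    using card_psl_orbit_member[OF that] assms(1) by simp
  then have "is_3design UNIV k (psl_orbit S) \<longleftrightarrow> (\<exists>lam>0. \<forall>T. card T = 3 \<longrightarrow> ?N T = lam)"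
    unfolding is_3design_def by auto
  also have "\<dots> \<longleftrightarrow> ?A 1 = ?A (-1)"
  proof
    assume "\<exists>lam>0. \<forall>T. card T = 3 \<longrightarrow> ?N T = lam"
    then have "?N T1 = ?N Tm"
      using T1 Tm by (auto simp: sign_class_def)
    then show "?A 1 = ?A (-1)"
      using card_blocks_through_eq_iff[OF T1 Tm] by simp
  next
    assume "?A 1 = ?A (-1)"
    then show "\<exists>lam>0. \<forall>T. card T = 3 \<longrightarrow> ?N T = lam"
      using card_blocks_through_eq_iff[OF T1 Tm] uniform positive by blast
  qed
  finally show ?thesis .
qed

lemma sum_tri_sign_set_subsets:
  "(\<Sum>T | T \<subseteq> S \<and> card T = 3. tri_sign_set T) =
    int (card {T \<in> sign_class 1. T \<subseteq> S}) - int (card {T \<in> sign_class (-1). T \<subseteq> (S :: 'a option set)})"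
proof -
  have "{T \<in> {T. T \<subseteq> S \<and> card T = 3}. tri_sign_set T = e} = {T \<in> sign_class e. T \<subseteq> S}" for e
    by (auto simp: sign_class_def)
  then show ?thesis
    using sum_plus_minus_one[of "{T. T \<subseteq> S \<and> card T = 3}" tri_sign_set] tri_sign_set_cases by simp
qed

lemma sum_tri_chi_eq_sum_tri_sign_set:
  "(\<Sum>S\<in>{S. S \<subseteq> B \<and> card S = 3}. tri_chi S) =
    (\<Sum>T | T \<subseteq> Some ` B \<and> card T = 3. tri_sign_set (T :: 'a option set))"
proof -
  have "inj_on ((`) Some) {S. S \<subseteq> B \<and> card S = 3}"
    by (auto intro: inj_onI simp: inj_image_eq_iff)
  have "(\<Sum>S\<in>{S. S \<subseteq> B \<and> card S = 3}. tri_chi S) =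
    (\<Sum>S\<in>{S. S \<subseteq> B \<and> card S = 3}. tri_sign_set (Some ` S))"
    by (rule sum.cong[OF refl]) (simp add: tri_chi_eq_tri_sign_set)
  also have "\<dots> = (\<Sum>T\<in>(`) Some ` {S. S \<subseteq> B \<and> card S = 3}. tri_sign_set T)"
    using sum.reindex[OF \<open>inj_on ((`) Some) {S. S \<subseteq> B \<and> card S = 3}\<close>, of tri_sign_set]
    by (simp add: comp_def)
  also have "(`) Some ` {S. S \<subseteq> B \<and> card S = 3} = {T. T \<subseteq> Some ` B \<and> card T = 3}"
    by (auto simp: subset_image_iff card_image)
  finally show ?thesis .
qed

end

theorem lemma2p6:
  fixes B :: "'a::{finite,field} set" and k :: nat
  assumes odd_q: "odd (card (UNIV :: 'a set))"
    and q_mod4: "(card (UNIV :: 'a set)) mod 4 = 1"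
    and k_ge: "k \<ge> 3"
    and k_dvd: "k dvd (card (UNIV :: 'a set)) - 1"
    and even_quot: "even (((card (UNIV :: 'a set)) - 1) div k)"
    and B_nz: "0 \<notin> B"
    and B_one: "1 \<in> B"
    and B_mult: "\<forall>x\<in>B. \<forall>y\<in>B. x * y \<in> B"
    and B_inv: "\<forall>x\<in>B. inverse x \<in> B"
    and B_card: "card B = k"
  shows "gives_3design B k \<longleftrightarrow> (\<Sum>S\<in>{S. S \<subseteq> B \<and> card S = 3}. tri_chi S) = 0"
proof -
  have "card (Some ` B) = k"
    using B_card by (simp add: card_image)
  then have "gives_3design B k \<longleftrightarrow>
    card {T \<in> sign_class 1. T \<subseteq> Some ` B} = card {T \<in> sign_class (-1). T \<subseteq> Some ` B}"
    unfolding gives_3design_def by (rule is_3design_psl_orbit_iff[OF q_mod4 _ k_ge])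
  moreover have "(\<Sum>S\<in>{S. S \<subseteq> B \<and> card S = 3}. tri_chi S) =
    int (card {T \<in> sign_class 1. T \<subseteq> Some ` B}) - int (card {T \<in> sign_class (-1). T \<subseteq> Some ` B})"
    using sum_tri_chi_eq_sum_tri_sign_set[OF q_mod4] sum_tri_sign_set_subsets[OF q_mod4] by simp
  ultimately show ?thesis by simp
qed

end
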